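(* Let $\mathcal{Y}$ be a measurable space, $\{Y_t\}_{t\ge0}$ a Markov chain on $\mathcal{Y}$ with transition kernel $P$, $H:\mathbb{R}^d\times\mathcal{Y}\to\mathbb{R}^d$, $h(w)\doteq\mathbb{E}_{y\sim d_{\mathcal{Y}}}[H(w,y)]$, satisfying the standing assumptions (A1)–(A3) below, and let $w_*$ be the fixed point of $h$. Let $w_0\in\mathbb{R}^d$, $\nu\in(0,1)$, $C_\alpha>0$, and $w_{t+1}=w_t+\alpha_t(H(w_t,Y_{t+1})-w_t)$ with $\alpha_t=\frac{C_\alpha}{(t+3)\ln^{\nu}(t+3)}$. Suppose $C_\alpha\ge\bar C_\alpha$ and that $C,C'$ and the positive integer $K$ are deterministic constants such that for every $\delta\in(0,1)$, with probability at least $1-\delta$, for all $t\ge0$, $\|w_t-w_*\|^2\le a(t)\big[\log(1/\delta)+b(t)\big]^{K}$, where $$a(t)\doteq C\exp\Big(-\frac{\ln^{1-\nu}(t+1)}{1-\nu}\Big),\qquad b(t)\doteq C'+\frac{\ln^{1-\nu}(t+1)}{1-\nu}$$ (such constants $\bar C_\alpha, C, C', K$ exist by the concentration result for this algorithm). Then for any $p\ge 2$ and any $t\ge 0$, $$\mathbb{E}\big[\|w_t-w_*\|^{2p}\big]\le\big(a(t)\,b(t)^{K}\big)^p+K p\, a(t)^p\exp(b(t))\,\big((Kp)!\big).$$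
   Context: (A1) $\{Y_t\}$ has a unique stationary distribution $d_{\mathcal{Y}}$ and there exist $\varrho\in[0,1)$, $C_A$ with $\int_{\mathcal{Y}}|P^n(y,y')-d_{\mathcal{Y}}(y')|\,\mathrm{d}y'\le C_A\varrho^n$ for all $y$, $n$ ($P^n$ the $n$-step kernel). (A2) There are $\kappa\in[0,1)$ and a norm $\|\cdot\|$ with $\|h(w)-h(w')\|\le\kappa\|w-w'\|$; $w_*$ is the unique fixed point of $h$. (A3) There is $L_h<\infty$ with $\|H(w,y)-H(w',y)\|\le L_h\|w-w'\|$ for all $w,w',y$ and $\sup_y\|H(0,y)\|<\infty$. For a non-integer $x\ge0$, $x!$ is understood as $\Gamma(x+1)$. *)

theory Defs
  imports "HOL-Probability.Probability"
begin

definition is_norm :: "('v::real_vector \<Rightarrow> real) \<Rightarrow> bool" where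
  "is_norm nrm \<longleftrightarrow>
     (\<forall>x. 0 \<le> nrm x) \<and> (\<forall>x. nrm x = 0 \<longleftrightarrow> x = 0) \<and>
     (\<forall>c x. nrm (c *\<^sub>R x) = \<bar>c\<bar> * nrm x) \<and>
     (\<forall>x y. nrm (x + y) \<le> nrm x + nrm y)"

primrec kstep :: "'y measure \<Rightarrow> ('y \<Rightarrow> 'y measure) \<Rightarrow> nat \<Rightarrow> 'y \<Rightarrow> 'y measure" where
  "kstep Ys P 0 y = return Ys y"
| "kstep Ys P (Suc n) y = bind (kstep Ys P n y) P"

text \<open>L1 distance between two probability measures, i.e. the integral of the absolute
  difference of densities; equals twice the total variation distance.\<close>
definition l1_dist :: "'y measure \<Rightarrow> 'y measure \<Rightarrow> real" where
  "l1_dist \<mu> \<nu> = 2 * (SUP A\<in>sets \<mu>. \<bar>measure \<mu> A - measure \<nu> A\<bar>)"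

text \<open>Y is a time-homogeneous Markov chain on Ys with transition kernel P
  (w.r.t. its natural filtration), defined on the probability space M.\<close>
definition markov_chain ::
  "'a measure \<Rightarrow> 'y measure \<Rightarrow> ('y \<Rightarrow> 'y measure) \<Rightarrow> (nat \<Rightarrow> 'a \<Rightarrow> 'y) \<Rightarrow> bool" where
  "markov_chain M Ys P Y \<longleftrightarrow>
     prob_space M \<and> (\<forall>t. Y t \<in> M \<rightarrow>\<^sub>M Ys) \<and> P \<in> Ys \<rightarrow>\<^sub>M prob_algebra Ys \<and>
     (\<forall>t (A :: nat \<Rightarrow> 'y set). (\<forall>i. A i \<in> sets Ys) \<longrightarrow>
        measure M {x \<in> space M. \<forall>i\<le>Suc t. Y i x \<in> A i} =
        (\<integral>x. indicator {x \<in> space M. \<forall>i\<le>t. Y i x \<in> A i} x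
               * measure (P (Y t x)) (A (Suc t)) \<partial>M))"

definition stationary_dist :: "'y measure \<Rightarrow> ('y \<Rightarrow> 'y measure) \<Rightarrow> 'y measure \<Rightarrow> bool" where
  "stationary_dist Ys P d \<longleftrightarrow> d \<in> space (prob_algebra Ys) \<and> bind d P = d"

primrec sa_iter ::
  "('w::real_vector \<Rightarrow> 'y \<Rightarrow> 'w) \<Rightarrow> (nat \<Rightarrow> real) \<Rightarrow> 'w \<Rightarrow> (nat \<Rightarrow> 'a \<Rightarrow> 'y) \<Rightarrow> nat \<Rightarrow> 'a \<Rightarrow> 'w" where
  "sa_iter H \<alpha> w0 Y 0 x = w0"
| "sa_iter H \<alpha> w0 Y (Suc t) x =
     sa_iter H \<alpha> w0 Y t x + \<alpha> t *\<^sub>R (H (sa_iter H \<alpha> w0 Y t x) (Y (Suc t) x) - sa_iter H \<alpha> w0 Y t x)"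

definition step_size :: "real \<Rightarrow> real \<Rightarrow> nat \<Rightarrow> real" where
  "step_size C\<alpha> \<nu> t = C\<alpha> / ((real t + 3) * ln (real t + 3) powr \<nu>)"

definition a_fun :: "real \<Rightarrow> real \<Rightarrow> nat \<Rightarrow> real" where
  "a_fun C \<nu> t = C * exp (- (ln (real t + 1) powr (1 - \<nu>) / (1 - \<nu>)))"

definition b_fun :: "real \<Rightarrow> real \<Rightarrow> nat \<Rightarrow> real" where
  "b_fun C' \<nu> t = C' + ln (real t + 1) powr (1 - \<nu>) / (1 - \<nu>)"

end

theory Submission
  imports Defs
begin

text \<open>With \<open>a = a(t)\<close>, \<open>b = b(t)\<close> and \<open>R = (\<parallel>w\<^sub>t - w\<^sub>*\<parallel>\<^sup>2 / a)\<^bsup>1/K\<^esup>\<close> we have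
  \<open>\<parallel>w\<^sub>t - w\<^sub>*\<parallel>\<^bsup>2p\<^esup> = a\<^sup>p R\<^sup>q\<close> for \<open>q = Kp\<close>, and the concentration bound at confidence level
  \<open>\<delta> = e\<^bsup>b-r\<^esup>\<close> yields the exponential tail \<open>P(R > r) \<le> e\<^bsup>b-r\<^esup>\<close> for \<open>r \<ge> b\<close>. Bounding
  \<open>R\<^sup>q \<le> b\<^sup>q + \<integral>\<^sub>b\<^sup>R q r\<^bsup>q-1\<^esup> dr\<close> and exchanging expectation and integral (Tonelli) gives
  \<open>E R\<^sup>q \<le> b\<^sup>q + e\<^sup>b \<integral>\<^sub>0\<^sup>\<infinity> q r\<^bsup>q-1\<^esup> e\<^bsup>-r\<^esup> dr = b\<^sup>q + e\<^sup>b \<Gamma>(q+1)\<close>. The stated bound is weaker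
  by the factor \<open>Kp \<ge> 1\<close> in the second term.\<close>

lemma convex_on_is_norm:
  assumes "is_norm nrm"
  shows "convex_on UNIV nrm"
proof (rule convex_onI)
  fix t :: real and x y
  assume t: "0 < t" "t < 1"
  have "nrm ((1 - t) *\<^sub>R x + t *\<^sub>R y) \<le> nrm ((1 - t) *\<^sub>R x) + nrm (t *\<^sub>R y)"
    using assms unfolding is_norm_def by blast
  also have "\<dots> = (1 - t) * nrm x + t * nrm y"
    using assms t unfolding is_norm_def by simp
  finally show "nrm ((1 - t) *\<^sub>R x + t *\<^sub>R y) \<le> (1 - t) * nrm x + t * nrm y" .
qed simp

lemma borel_measurable_is_norm:
  fixes nrm :: "'v::euclidean_space \<Rightarrow> real"
  assumes "is_norm nrm"
  shows "nrm \<in> borel_measurable borel"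
  by (intro borel_measurable_continuous_onI convex_on_continuous convex_on_is_norm assms) simp

lemma borel_measurable_sa_iter:
  fixes H :: "'v::euclidean_space \<Rightarrow> 'y \<Rightarrow> 'v"
  assumes Y: "\<And>t. Y t \<in> M \<rightarrow>\<^sub>M Ys"
    and H: "(\<lambda>(w, y). H w y) \<in> borel \<Otimes>\<^sub>M Ys \<rightarrow>\<^sub>M borel"
  shows "sa_iter H \<alpha> w0 Y t \<in> borel_measurable M"
proof (induction t)
  case 0
  then show ?case by simp
next
  case (Suc t)
  have "(\<lambda>x. (sa_iter H \<alpha> w0 Y t x, Y (Suc t) x)) \<in> M \<rightarrow>\<^sub>M borel \<Otimes>\<^sub>M Ys"
    using Suc Y by measurable
  from measurable_compose[OF this H]
  have "(\<lambda>x. H (sa_iter H \<alpha> w0 Y t x) (Y (Suc t) x)) \<in> borel_measurable M" by simp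
  with Suc show ?case by simp
qed

lemma root_le_iff_le_power:
  fixes x u :: real
  assumes "0 < n" "0 \<le> u"
  shows "root n x \<le> u \<longleftrightarrow> x \<le> u ^ n"
  using assms real_root_le_iff[of n x "u ^ n"] by (simp add: real_root_power_cancel)

lemma powr_eq_powr_mult_root_powr:
  fixes z a p :: real
  assumes z: "0 \<le> z" and a: "0 < a" and n: "0 < n"
  shows "z powr p = a powr p * root n (z / a) powr (n * p)"
proof -
  have "root n (z / a) powr (n * p) = (root n (z / a) ^ n) powr p"
    using z a n by (simp add: powr_powr[symmetric] powr_realpow')
  also have "\<dots> = (z / a) powr p"
    using z a n by simp
  finally show ?thesis
    using z a by (simp add: powr_divide)
qed

lemma powr_2_mult: "0 \<le> (y::real) \<Longrightarrow> y powr (2 * p) = (y\<^sup>2) powr p"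
  by (simp add: powr_powr[symmetric] powr_realpow')

lemma powr_le_layer_cake:
  fixes b \<rho> q :: real
  assumes b: "0 \<le> b" and \<rho>: "0 \<le> \<rho>" and q: "0 < q"
  shows "ennreal (\<rho> powr q)
    \<le> ennreal (b powr q) + (\<integral>\<^sup>+r. ennreal (q * r powr (q - 1)) * indicator {b..<\<rho>} r \<partial>lborel)"
proof (cases "\<rho> \<le> b")
  case True
  then have "\<rho> powr q \<le> b powr q" using \<rho> q by (intro powr_mono2) auto
  then show ?thesis by (intro add_increasing2) auto
next
  case False
  have "((\<lambda>r. q * r powr (q - 1)) has_integral (\<rho> powr q - b powr q)) {b..\<rho>}"
  proof (rule fundamental_theorem_of_calculus_interior)
    show "continuous_on {b..\<rho>} (\<lambda>r. r powr q)"
      using b q by (intro continuous_on_powr') (auto intro: continuous_intros)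
    fix r assume "r \<in> {b<..<\<rho>}"
    then have "0 < r" using b by auto
    then show "((\<lambda>r. r powr q) has_vector_derivative q * r powr (q - 1)) (at r)"
      using has_real_derivative_powr[of r q] by (simp add: has_real_derivative_iff_has_vector_derivative)
  qed (use False in auto)
  then have "(\<integral>\<^sup>+r. ennreal (q * r powr (q - 1)) * indicator {b..\<rho>} r \<partial>lborel) = \<rho> powr q - b powr q"
    by (intro nn_integral_has_integral_lebesgue') (use b q in auto)
  moreover have "(\<integral>\<^sup>+r. ennreal (q * r powr (q - 1)) * indicator {b..<\<rho>} r \<partial>lborel)
      = (\<integral>\<^sup>+r. ennreal (q * r powr (q - 1)) * indicator {b..\<rho>} r \<partial>lborel)"
    by (intro nn_integral_cong_AE)
      (use AE_lborel_singleton[of \<rho>] in \<open>eventually_elim, auto simp: indicator_def\<close>)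
  moreover have "b powr q \<le> \<rho> powr q" using False b q by (intro powr_mono2) auto
  ultimately show ?thesis
    by (simp add: ennreal_plus[symmetric] del: ennreal_plus)
qed

lemma nn_integral_exp_tail_le_Gamma:
  fixes b q :: real
  assumes b: "0 \<le> b" and q: "0 < q"
  shows "(\<integral>\<^sup>+r. ennreal (q * r powr (q - 1) * exp (b - r)) * indicator {b..} r \<partial>lborel)
    \<le> ennreal (exp b * Gamma (q + 1))"
proof -
  have "(\<integral>\<^sup>+r. ennreal (q * r powr (q - 1) * exp (b - r)) * indicator {b..} r \<partial>lborel)
     \<le> (\<integral>\<^sup>+r. ennreal (q * exp b) * ennreal (indicator {0..} r * r powr (q - 1) / exp r) \<partial>lborel)"
    using b q by (intro nn_integral_mono)
      (auto simp: indicator_def exp_diff ennreal_mult'[symmetric] mult_ac)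
  also have "\<dots> = ennreal (q * exp b) * ennreal (Gamma q)"
    using q by (simp add: nn_integral_cmult Gamma_conv_nn_integral_real)
  also have "\<dots> = ennreal (exp b * (q * Gamma q))"
    using q by (simp add: ennreal_mult'[symmetric] mult_ac)
  also have "q * Gamma q = Gamma (q + 1)"
    using q nonpos_Ints_nonpos[of q] by (intro Gamma_plus1[symmetric]) force
  finally show ?thesis .
qed

lemma (in prob_space) exp_tail_of_confidence_bound:
  fixes R :: "'a \<Rightarrow> real"
  assumes R: "R \<in> borel_measurable M"
    and conf: "\<And>\<delta>. 0 < \<delta> \<Longrightarrow> \<delta> < 1 \<Longrightarrow> 1 - \<delta> \<le> prob {x \<in> space M. R x \<le> ln (1 / \<delta>) + b}"
    and r: "b \<le> r"
  shows "prob {x \<in> space M. r < R x} \<le> exp (b - r)"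
proof (cases "r = b")
  case True
  then show ?thesis by simp
next
  case False
  define \<delta> where "\<delta> = exp (b - r)"
  have \<delta>: "0 < \<delta>" "\<delta> < 1" unfolding \<delta>_def using r False by auto
  have "ln (1 / \<delta>) + b = r" unfolding \<delta>_def by (simp add: ln_div)
  then have "1 - \<delta> \<le> prob {x \<in> space M. R x \<le> r}" using conf[OF \<delta>] by simp
  moreover have "{x \<in> space M. r < R x} = space M - {x \<in> space M. R x \<le> r}" by auto
  moreover have "{x \<in> space M. R x \<le> r} \<in> events" using R by measurable
  ultimately show ?thesis unfolding \<delta>_def by (simp add: prob_compl)
qed

lemma (in prob_space) nn_integral_powr_le_of_exp_tail:
  fixes R :: "'a \<Rightarrow> real" and b q :: real
  assumes R: "R \<in> borel_measurable M" "\<And>x. 0 \<le> R x"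
    and b: "0 \<le> b" and q: "0 < q"
    and tail: "\<And>r. b \<le> r \<Longrightarrow> prob {x \<in> space M. r < R x} \<le> exp (b - r)"
  shows "(\<integral>\<^sup>+x. ennreal (R x powr q) \<partial>M) \<le> ennreal (b powr q + exp b * Gamma (q + 1))"
proof -
  define F where "F x r = ennreal (q * r powr (q - 1)) * indicator {b..<R x} r" for x r
  have F_measurable: "case_prod F \<in> borel_measurable (M \<Otimes>\<^sub>M lborel)"
    unfolding F_def indicator_def atLeastLessThan_iff using R(1) by measurable
  interpret pair_sigma_finite M lborel ..
  have "(\<integral>\<^sup>+x. ennreal (R x powr q) \<partial>M) \<le> (\<integral>\<^sup>+x. ennreal (b powr q) + (\<integral>\<^sup>+r. F x r \<partial>lborel) \<partial>M)"
    unfolding F_def using R(2) b q by (intro nn_integral_mono powr_le_layer_cake)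
  also have "\<dots> = ennreal (b powr q) + (\<integral>\<^sup>+x. \<integral>\<^sup>+r. F x r \<partial>lborel \<partial>M)"
    using lborel.borel_measurable_nn_integral[OF F_measurable]
    by (simp add: nn_integral_add emeasure_space_1)
  also have "(\<integral>\<^sup>+x. \<integral>\<^sup>+r. F x r \<partial>lborel \<partial>M) = (\<integral>\<^sup>+r. \<integral>\<^sup>+x. F x r \<partial>M \<partial>lborel)"
    using Fubini'[OF F_measurable] by simp
  also have "\<dots> \<le> (\<integral>\<^sup>+r. ennreal (q * r powr (q - 1) * exp (b - r)) * indicator {b..} r \<partial>lborel)"
  proof (intro nn_integral_mono)
    fix r :: real
    have "(\<integral>\<^sup>+x. F x r \<partial>M)
        = ennreal (q * r powr (q - 1)) * emeasure M {x \<in> space M. b \<le> r \<and> r < R x}"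
      unfolding F_def using R(1)
      by (subst nn_integral_cmult_indicator[symmetric]) (auto intro!: nn_integral_cong simp: indicator_def)
    also have "\<dots> \<le> ennreal (q * r powr (q - 1) * exp (b - r)) * indicator {b..} r"
      using tail[of r] q by (cases "b \<le> r")
        (auto simp: emeasure_eq_measure ennreal_mult'[symmetric] intro!: mult_left_mono)
    finally show "(\<integral>\<^sup>+x. F x r \<partial>M) \<le> ennreal (q * r powr (q - 1) * exp (b - r)) * indicator {b..} r" .
  qed
  also have "\<dots> \<le> ennreal (exp b * Gamma (q + 1))"
    using b q by (rule nn_integral_exp_tail_le_Gamma)
  finally show ?thesis
    using b q Gamma_real_pos[of "q + 1"]
    by (simp add: ennreal_plus[symmetric] add_left_mono del: ennreal_plus)
qed

lemma (in prob_space) nn_integral_powr_le_of_confidence_bound: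
  fixes Z :: "'a \<Rightarrow> real" and a b p :: real and K :: nat
  assumes Z: "Z \<in> borel_measurable M" "\<And>x. 0 \<le> Z x"
    and a: "0 < a" and b: "0 \<le> b" and K: "0 < K" and p: "0 < p"
    and conf: "\<And>\<delta>. 0 < \<delta> \<Longrightarrow> \<delta> < 1 \<Longrightarrow>
      1 - \<delta> \<le> prob {x \<in> space M. Z x \<le> a * (ln (1 / \<delta>) + b) ^ K}"
  shows "(\<integral>\<^sup>+x. ennreal (Z x powr p) \<partial>M)
    \<le> ennreal ((a * b ^ K) powr p + a powr p * exp b * Gamma (K * p + 1))"
proof -
  define R where "R x = root K (Z x / a)" for x
  have R_measurable: "R \<in> borel_measurable M"
    unfolding R_def using Z(1) by measurable
  have R_nonneg: "0 \<le> R x" for x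
    unfolding R_def by (intro real_root_ge_zero divide_nonneg_pos Z(2) a)
  have R_le_iff: "R x \<le> u \<longleftrightarrow> Z x \<le> a * u ^ K" if "0 \<le> u" for x u
    using that a K by (simp add: R_def root_le_iff_le_power pos_divide_le_eq mult.commute)
  have tail: "prob {x \<in> space M. r < R x} \<le> exp (b - r)" if "b \<le> r" for r
  proof (rule exp_tail_of_confidence_bound[OF R_measurable _ that])
    fix \<delta> :: real
    assume \<delta>: "0 < \<delta>" "\<delta> < 1"
    then have "0 \<le> ln (1 / \<delta>) + b" using b by simp
    then show "1 - \<delta> \<le> prob {x \<in> space M. R x \<le> ln (1 / \<delta>) + b}"
      using conf[OF \<delta>] by (simp add: R_le_iff)
  qed
  have "Z x powr p = a powr p * R x powr (K * p)" for x
    unfolding R_def using Z(2) a K by (rule powr_eq_powr_mult_root_powr)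
  then have "(\<integral>\<^sup>+x. ennreal (Z x powr p) \<partial>M) = ennreal (a powr p) * (\<integral>\<^sup>+x. ennreal (R x powr (K * p)) \<partial>M)"
    using R_measurable by (simp add: ennreal_mult nn_integral_cmult)
  also have "\<dots> \<le> ennreal (a powr p) * ennreal (b powr (K * p) + exp b * Gamma (K * p + 1))"
    using R_measurable R_nonneg b K p tail
    by (intro mult_left_mono nn_integral_powr_le_of_exp_tail) auto
  also have "a powr p * b powr (K * p) = (a * b ^ K) powr p"
    using a b K by (simp add: powr_mult powr_powr[symmetric] powr_realpow')
  then have "ennreal (a powr p) * ennreal (b powr (K * p) + exp b * Gamma (K * p + 1))
      = ennreal ((a * b ^ K) powr p + a powr p * exp b * Gamma (K * p + 1))"
    using b K p Gamma_real_pos[of "K * p + 1"]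
    by (simp add: ennreal_mult'[symmetric] distrib_left mult_ac)
  finally show ?thesis .
qed

theorem corollary1:
  fixes M :: "'a measure" and Ys :: "'y measure" and P :: "'y \<Rightarrow> 'y measure"
    and Y :: "nat \<Rightarrow> 'a \<Rightarrow> 'y" and d\<^sub>Y :: "'y measure"
    and H :: "real^'d \<Rightarrow> 'y \<Rightarrow> real^'d" and h :: "real^'d \<Rightarrow> real^'d"
    and nrm :: "real^'d \<Rightarrow> real" and w_star w0 :: "real^'d"
    and \<nu> C\<alpha> C C' p :: real and K t :: nat
  assumes MC: "markov_chain M Ys P Y"
    and H_meas: "(\<lambda>(w, y). H w y) \<in> borel \<Otimes>\<^sub>M Ys \<rightarrow>\<^sub>M borel"
    \<comment> \<open>(A1)\<close>
    and stat: "stationary_dist Ys P d\<^sub>Y"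
    and stat_unique: "\<And>d'. stationary_dist Ys P d' \<Longrightarrow> d' = d\<^sub>Y"
    and mixing: "\<exists>\<rho> C\<^sub>A. 0 \<le> \<rho> \<and> \<rho> < 1 \<and>
                   (\<forall>y\<in>space Ys. \<forall>n. l1_dist (kstep Ys P n y) d\<^sub>Y \<le> C\<^sub>A * \<rho> ^ n)"
    \<comment> \<open>definition of h\<close>
    and h_def: "\<And>w. h w = (\<integral>y. H w y \<partial>d\<^sub>Y)"
    \<comment> \<open>(A2)\<close>
    and nrm: "is_norm nrm"
    and contr: "\<exists>\<kappa>. 0 \<le> \<kappa> \<and> \<kappa> < 1 \<and> (\<forall>w w'. nrm (h w - h w') \<le> \<kappa> * nrm (w - w'))"
    and fixp: "h w_star = w_star" and fixp_unique: "\<And>w. h w = w \<Longrightarrow> w = w_star"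
    \<comment> \<open>(A3)\<close>
    and lip: "\<exists>L\<^sub>h. \<forall>w w'. \<forall>y\<in>space Ys. nrm (H w y - H w' y) \<le> L\<^sub>h * nrm (w - w')"
    and bdd: "\<exists>B. \<forall>y\<in>space Ys. nrm (H 0 y) \<le> B"
    \<comment> \<open>parameters\<close>
    and \<nu>: "0 < \<nu>" "\<nu> < 1" and C\<alpha>: "0 < C\<alpha>"
    and K: "0 < K" and C: "0 < C" and C': "0 \<le> C'"
    \<comment> \<open>high-probability concentration bound\<close>
    and conc: "\<And>\<delta>. 0 < \<delta> \<Longrightarrow> \<delta> < 1 \<Longrightarrow>
       prob_space.prob M {x \<in> space M. \<forall>s.
          (nrm (sa_iter H (step_size C\<alpha> \<nu>) w0 Y s x - w_star))\<^sup>2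
            \<le> a_fun C \<nu> s * (ln (1 / \<delta>) + b_fun C' \<nu> s) ^ K} \<ge> 1 - \<delta>"
    and p: "2 \<le> p"
  shows "(\<integral>\<^sup>+x. ennreal (nrm (sa_iter H (step_size C\<alpha> \<nu>) w0 Y t x - w_star) powr (2 * p)) \<partial>M)
           \<le> ennreal ((a_fun C \<nu> t * b_fun C' \<nu> t ^ K) powr p
              + real K * p * a_fun C \<nu> t powr p * exp (b_fun C' \<nu> t) * Gamma (real K * p + 1))"
proof -
  interpret prob_space M
    using MC unfolding markov_chain_def by simp
  define N where "N s x = nrm (sa_iter H (step_size C\<alpha> \<nu>) w0 Y s x - w_star)" for s x
  have "sa_iter H (step_size C\<alpha> \<nu>) w0 Y t \<in> borel_measurable M"
    using MC H_meas unfolding markov_chain_def by (intro borel_measurable_sa_iter) auto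
  then have N_measurable[measurable]: "N t \<in> borel_measurable M"
    unfolding N_def using borel_measurable_is_norm[OF nrm] by measurable
  have N_nonneg: "0 \<le> N t x" for x
    using nrm unfolding N_def is_norm_def by simp
  have conf: "1 - \<delta> \<le> prob {x \<in> space M. (N t x)\<^sup>2 \<le> a_fun C \<nu> t * (ln (1 / \<delta>) + b_fun C' \<nu> t) ^ K}"
    if "0 < \<delta>" "\<delta> < 1" for \<delta>
    by (rule order.trans[OF conc[OF that] finite_measure_mono]) (force simp: N_def, measurable)
  have "(\<integral>\<^sup>+x. ennreal (N t x powr (2 * p)) \<partial>M)
    \<le> ennreal ((a_fun C \<nu> t * b_fun C' \<nu> t ^ K) powr p
        + a_fun C \<nu> t powr p * exp (b_fun C' \<nu> t) * Gamma (K * p + 1))"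
    unfolding powr_2_mult[OF N_nonneg] using N_nonneg conf C C' \<nu> K p
    by (intro nn_integral_powr_le_of_confidence_bound) (auto simp: a_fun_def b_fun_def)
  also have "\<dots> \<le> ennreal ((a_fun C \<nu> t * b_fun C' \<nu> t ^ K) powr p
      + real K * p * a_fun C \<nu> t powr p * exp (b_fun C' \<nu> t) * Gamma (real K * p + 1))"
  proof -
    have Kp: "1 \<le> real K * p"
      using K p mult_mono[of 1 "real K" 1 p] by simp
    have "0 < Gamma (real K * p + 1)"
      using p by (intro Gamma_real_pos add_nonneg_pos mult_nonneg_nonneg) auto
    then have "0 \<le> a_fun C \<nu> t powr p * exp (b_fun C' \<nu> t) * Gamma (real K * p + 1)"
      by simp
    from mult_right_mono[OF Kp this] show ?thesis
      by (intro ennreal_leI add_left_mono) (simp add: mult.assoc)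
  qed
  finally show ?thesis
    unfolding N_def .
qed

end
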